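(* Let $\omega$ be a regular weight. If $T\in B(X)$ and $x\in X$ satisfy $\|e^{tT}x\|\le C_x\,\omega(t)$ for all $t\in\mathbb{R}$ and some constant $C_x>0$, then $\sigma_T(x)\subset i\mathbb{R}$.
   Context: $X$ is a complex Banach space, $B(X)$ the bounded linear operators on $X$. A weight is a continuous function $\omega:\mathbb{R}\to[1,\infty)$ with $\omega(t+s)\le\omega(t)\omega(s)$ for all $t,s$; it is regular if $\int_{\mathbb{R}}\frac{\log\omega(t)}{1+t^2}\,dt<\infty$. For $T\in B(X)$ and $x\in X$, $\rho_T(x)$ is the set of $\lambda\in\mathbb{C}$ having an open neighbourhood $U$ and an analytic $u:U\to X$ with $(zI-T)u(z)=x$ on $U$; the local spectrum is $\sigma_T(x)=\mathbb{C}\setminus\rho_T(x)$. *)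

theory Defs
  imports "HOL-Analysis.Analysis"
begin

class complex_banach = banach +
  fixes scaleC :: "complex \<Rightarrow> 'a \<Rightarrow> 'a"
  assumes scaleC_of_real: "scaleC (complex_of_real r) x = scaleR r x"
    and scaleC_add_right: "scaleC a (x + y) = scaleC a x + scaleC a y"
    and scaleC_add_left: "scaleC (a + b) x = scaleC a x + scaleC b x"
    and scaleC_scaleC: "scaleC a (scaleC b x) = scaleC (a * b) x"
    and scaleC_one: "scaleC 1 x = x"
    and norm_scaleC: "norm (scaleC a x) = cmod a * norm x"

definition complex_bounded_op :: "('a::complex_banach \<Rightarrow>\<^sub>L 'a) \<Rightarrow> bool" where
  "complex_bounded_op T \<longleftrightarrow> (\<forall>c x. blinfun_apply T (scaleC c x) = scaleC c (blinfun_apply T x))"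

definition weight :: "(real \<Rightarrow> real) \<Rightarrow> bool" where
  "weight \<omega> \<longleftrightarrow> continuous_on UNIV \<omega> \<and> (\<forall>t. 1 \<le> \<omega> t)
     \<and> (\<forall>t s. \<omega> (t + s) \<le> \<omega> t * \<omega> s)"

definition regular_weight :: "(real \<Rightarrow> real) \<Rightarrow> bool" where
  "regular_weight \<omega> \<longleftrightarrow> weight \<omega> \<and>
     (\<lambda>t. ln (\<omega> t) / (1 + t\<^sup>2)) integrable_on UNIV"

definition op_exp_apply :: "real \<Rightarrow> ('a::banach \<Rightarrow>\<^sub>L 'a) \<Rightarrow> 'a \<Rightarrow> 'a" where
  "op_exp_apply t T x = (\<Sum>n. (t ^ n / fact n) *\<^sub>R ((blinfun_apply T ^^ n) x))"

definition c_holomorphic_on :: "(complex \<Rightarrow> 'a::complex_banach) \<Rightarrow> complex set \<Rightarrow> bool" where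
  "c_holomorphic_on u U \<longleftrightarrow>
     (\<forall>z\<in>U. \<exists>d. ((\<lambda>h. scaleC (inverse h) (u (z + h) - u z)) \<longlongrightarrow> d) (at 0))"

definition local_resolvent :: "('a::complex_banach \<Rightarrow>\<^sub>L 'a) \<Rightarrow> 'a \<Rightarrow> complex set" where
  "local_resolvent T x = {l. \<exists>U u. open U \<and> l \<in> U \<and> c_holomorphic_on u U \<and>
       (\<forall>z\<in>U. scaleC z (u z) - blinfun_apply T (u z) = x)}"

definition local_spectrum :: "('a::complex_banach \<Rightarrow>\<^sub>L 'a) \<Rightarrow> 'a \<Rightarrow> complex set" where
  "local_spectrum T x = UNIV - local_resolvent T x"

end

theory Submission
  imports Defs
begin

text \<open>Fix \<open>\<lambda>\<close> with \<open>Re \<lambda> \<noteq> 0\<close>, put \<open>\<sigma> = -Re \<lambda>\<close> and \<open>A = \<lambda> - T\<close>. In a Banach algebra containing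
  \<open>B(X)\<close>, the elements \<open>B = exp(\<sigma>A)\<close> and \<open>P = -\<sigma> \<phi>(\<sigma>A)\<close>, where \<open>\<phi>(z) = (exp z - 1)/z\<close>,
  commute and satisfy \<open>A P = 1 - B\<close>. Since \<open>B^n x = exp(n\<sigma>\<lambda>) exp(-n\<sigma>T) x\<close> and a regular weight
  grows more slowly than every exponential, \<open>\<parallel>B^n x\<parallel>\<close> decays geometrically. Iterating the
  Neumann series of \<open>1 - B\<close> along the orbit of \<open>x\<close> then yields vectors \<open>v\<^sub>k\<close> with \<open>A v\<^sub>0 = x\<close>,
  \<open>A v\<^sub>k\<^sub>+\<^sub>1 = v\<^sub>k\<close> and \<open>\<parallel>v\<^sub>k\<parallel> \<le> M Q^k\<close>, and \<open>u(z) = \<Sum>\<^sub>k (\<lambda> - z)^k v\<^sub>k\<close> is an analytic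
  solution of \<open>(z - T) u(z) = x\<close> near \<open>\<lambda>\<close>.\<close>

section \<open>Complex scalar multiplication\<close>

lemma scaleC_scaleR_right: "scaleC c (r *\<^sub>R x::'a::complex_banach) = r *\<^sub>R scaleC c x"
  by (metis mult.commute scaleC_of_real scaleC_scaleC)

lemma scaleC_scaleR_left: "scaleC (r *\<^sub>R c) (x::'a::complex_banach) = r *\<^sub>R scaleC c x"
  by (metis scaleC_of_real scaleC_scaleC scaleR_conv_of_real)

lemma bounded_linear_scaleC_right: "bounded_linear (scaleC c :: 'a::complex_banach \<Rightarrow> 'a)"
  by (rule bounded_linear_intro[where K="cmod c"])
     (auto simp: scaleC_add_right scaleC_scaleR_right norm_scaleC)

lemma bounded_linear_scaleC_left: "bounded_linear (\<lambda>c. scaleC c (x::'a::complex_banach))"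
  by (rule bounded_linear_intro[where K="norm x"])
     (auto simp: scaleC_add_left scaleC_scaleR_left norm_scaleC mult.commute)

lemma scaleC_diff_left: "scaleC (c - d) (x::'a::complex_banach) = scaleC c x - scaleC d x"
  by (rule linear_diff[OF bounded_linear.linear[OF bounded_linear_scaleC_left]])

lemma scaleC_diff_right: "scaleC c (x - y::'a::complex_banach) = scaleC c x - scaleC c y"
  by (rule linear_diff[OF bounded_linear.linear[OF bounded_linear_scaleC_right]])

lemma scaleC_suminf_right:
  "summable f \<Longrightarrow> scaleC c (suminf f) = (\<Sum>n. scaleC c (f n :: 'a::complex_banach))"
  using bounded_linear.suminf[OF bounded_linear_scaleC_right] by metis

lemma scaleC_suminf_left:
  "summable f \<Longrightarrow> scaleC (suminf f) (x::'a::complex_banach) = (\<Sum>n. scaleC (f n) x)"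
  using bounded_linear.suminf[OF bounded_linear_scaleC_left] by metis

lemma continuous_on_scaleC_left:
  "continuous_on S g \<Longrightarrow> continuous_on S (\<lambda>h. scaleC (g h) (x::'a::complex_banach))"
  using linear_continuous_on[OF bounded_linear_scaleC_left, of UNIV x]
  by (rule continuous_on_compose2) auto

section \<open>Power series with vector coefficients\<close>

lemma summable_of_nat_mult_power:
  fixes s :: real assumes "\<bar>s\<bar> < 1"
  shows "summable (\<lambda>k. real k * s^(k-1))"
proof -
  have "summable (\<lambda>n. diffs (\<lambda>_. 1::real) n * s ^ n)"
    by (rule termdiff_converges[where K=1]) (use assms in \<open>auto intro: summable_geometric\<close>)
  then have "summable (\<lambda>k. real (Suc k) * s^k)" by (simp add: diffs_def)
  then show ?thesis by (subst summable_Suc_iff[symmetric]) simp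
qed

lemma summable_scaleC_power_series:
  fixes a :: "nat \<Rightarrow> 'a::complex_banach"
  assumes bound: "\<And>k. norm (a k) \<le> K * Q^k" and "0 \<le> Q" "cmod w * Q < 1"
  shows "summable (\<lambda>k. scaleC (w^k) (a k))"
proof (rule summable_comparison_test[where g="\<lambda>k. K * (cmod w * Q)^k"])
  have "norm (scaleC (w^k) (a k)) \<le> cmod w ^ k * (K * Q^k)" for k
    unfolding norm_scaleC norm_power by (intro mult_left_mono bound) auto
  then show "\<exists>N. \<forall>k\<ge>N. norm (scaleC (w^k) (a k)) \<le> K * (cmod w * Q)^k"
    by (simp add: power_mult_distrib mult_ac)
  show "summable (\<lambda>k. K * (cmod w * Q)^k)"
    using assms(2,3) by (intro summable_mult summable_geometric) auto
qed

lemma norm_power_diff_quotient_le: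
  fixes c h :: complex
  assumes "cmod c \<le> R" "cmod (c + h) \<le> R"
  shows "cmod (\<Sum>i<k. c^(k - Suc i) * (c + h)^i) \<le> real k * R^(k - 1)"
proof -
  have "0 \<le> R" using assms(1) norm_ge_zero order_trans by blast
  have term_le: "cmod (c^(k - Suc i) * (c + h)^i) \<le> R^(k - 1)" if "i < k" for i
  proof -
    have "cmod (c^(k - Suc i) * (c + h)^i) \<le> R^(k - Suc i) * R^i"
      unfolding norm_mult norm_power by (intro mult_mono power_mono) (use assms \<open>0 \<le> R\<close> in auto)
    also have "\<dots> = R^(k - 1)" using that by (simp add: power_add[symmetric])
    finally show ?thesis .
  qed
  have "cmod (\<Sum>i<k. c^(k - Suc i) * (c + h)^i) \<le> (\<Sum>i<k. cmod (c^(k - Suc i) * (c + h)^i))"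
    by (rule norm_sum)
  also have "\<dots> \<le> (\<Sum>i<k. R^(k - 1))"
    by (intro sum_mono term_le) simp
  finally show ?thesis by simp
qed

text \<open>Differentiability follows by writing the difference quotient at \<open>z = z\<^sub>0 + c\<close> as
  \<open>F h = \<Sum>\<^sub>k g\<^sub>k(h) a\<^sub>k\<close> with \<open>g\<^sub>k(h) = ((c + h)\<^sup>k - c\<^sup>k)/h\<close> a polynomial in \<open>h\<close>; the series
  converges uniformly near \<open>h = 0\<close>, so \<open>F\<close> is continuous there.\<close>

lemma c_holomorphic_on_power_series:
  fixes a :: "nat \<Rightarrow> 'a::complex_banach"
  assumes bound: "\<And>k. norm (a k) \<le> K * Q^k" and Q: "0 < Q"
  shows "c_holomorphic_on (\<lambda>z. \<Sum>k. scaleC ((z - z0)^k) (a k)) (ball z0 (1/Q))"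
  unfolding c_holomorphic_on_def
proof
  fix z assume "z \<in> ball z0 (1/Q)"
  define c where "c = z - z0"
  have "cmod c < 1/Q" using \<open>z \<in> ball z0 (1/Q)\<close> by (simp add: c_def dist_norm norm_minus_commute)
  define R where "R = (cmod c + 1/Q) / 2"
  have "cmod c < R" and "R * Q < 1" and "0 \<le> R"
    using \<open>cmod c < 1/Q\<close> Q norm_ge_zero[of c] by (auto simp: R_def field_simps)
  define \<delta> where "\<delta> = R - cmod c"
  have "0 < \<delta>" using \<open>cmod c < R\<close> by (simp add: \<delta>_def)
  have near: "cmod (c + h) \<le> R" if "cmod h < \<delta>" for h
    using norm_triangle_ineq[of c h] that by (simp add: \<delta>_def)
  have summable_at: "summable (\<lambda>k. scaleC (w^k) (a k))" if "cmod w \<le> R" for w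
  proof (rule summable_scaleC_power_series[OF bound])
    have "cmod w * Q \<le> R * Q" using that Q by (intro mult_right_mono) auto
    then show "cmod w * Q < 1" using \<open>R * Q < 1\<close> by linarith
  qed (use Q in simp)
  define g where "g k h = (\<Sum>i<k. c^(k - Suc i) * (c + h)^i)" for k h
  have power_diff: "(c + h)^k - c^k = h * g k h" for k h
    using power_diff_sumr2[of "c + h" k c] by (simp add: g_def)
  define F where "F h = (\<Sum>k. scaleC (g k h) (a k))" for h
  have "uniform_limit (ball 0 \<delta>) (\<lambda>n h. \<Sum>k<n. scaleC (g k h) (a k)) F sequentially"
    unfolding F_def
  proof (rule Weierstrass_m_test)
    show "norm (scaleC (g k h) (a k)) \<le> K * Q * (real k * (R * Q)^(k - 1))"
      if "h \<in> ball 0 \<delta>" for k h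
    proof -
      have "norm (scaleC (g k h) (a k)) \<le> (real k * R^(k - 1)) * (K * Q^k)"
        unfolding norm_scaleC g_def using that \<open>cmod c < R\<close>
        by (intro mult_mono norm_power_diff_quotient_le bound near) (auto simp: \<open>0 \<le> R\<close>)
      also have "\<dots> = K * Q * (real k * (R * Q)^(k - 1))"
        by (cases k) (simp_all add: power_mult_distrib)
      finally show ?thesis .
    qed
    show "summable (\<lambda>k. K * Q * (real k * (R * Q)^(k - 1)))"
      using summable_of_nat_mult_power[of "R * Q"] \<open>0 \<le> R\<close> Q \<open>R * Q < 1\<close>
      by (intro summable_mult) auto
  qed
  moreover have "continuous_on (ball 0 \<delta>) (\<lambda>h. \<Sum>k<n. scaleC (g k h) (a k))" for n
    unfolding g_def by (intro continuous_on_sum continuous_on_scaleC_left continuous_intros)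
  ultimately have "continuous_on (ball 0 \<delta>) F"
    by (intro uniform_limit_theorem[where F=sequentially]) (auto intro: always_eventually)
  then have lim_F: "(F \<longlongrightarrow> F 0) (at 0)"
    using \<open>0 < \<delta>\<close> continuous_on_eq_continuous_at[of "ball 0 \<delta>" F] by (simp add: isCont_def)
  have quotient_eq: "scaleC (inverse h) ((\<Sum>k. scaleC ((z + h - z0)^k) (a k))
      - (\<Sum>k. scaleC ((z - z0)^k) (a k))) = F h" if "h \<noteq> 0" "cmod h < \<delta>" for h
  proof -
    have summable_near: "summable (\<lambda>k. scaleC ((c + h)^k) (a k))"
      using near[OF \<open>cmod h < \<delta>\<close>] by (rule summable_at)
    have summable_c: "summable (\<lambda>k. scaleC (c^k) (a k))"
      using \<open>cmod c < R\<close> by (intro summable_at) simp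
    have diff: "(\<lambda>k. scaleC (h * g k h) (a k)) = (\<lambda>k. scaleC ((c + h)^k) (a k) - scaleC (c^k) (a k))"
      by (simp add: power_diff[symmetric] scaleC_diff_left)
    have "(\<Sum>k. scaleC ((c + h)^k) (a k)) - (\<Sum>k. scaleC (c^k) (a k))
        = (\<Sum>k. scaleC (h * g k h) (a k))"
      unfolding diff by (rule suminf_diff[OF summable_near summable_c])
    moreover have "summable (\<lambda>k. scaleC (h * g k h) (a k))"
      unfolding diff by (rule summable_diff[OF summable_near summable_c])
    then have "scaleC (inverse h) (\<Sum>k. scaleC (h * g k h) (a k)) = F h"
      using \<open>h \<noteq> 0\<close> by (simp add: F_def scaleC_suminf_right scaleC_scaleC mult.assoc[symmetric])
    moreover have "z + h - z0 = c + h" "z - z0 = c" by (simp_all add: c_def)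
    ultimately show ?thesis by (simp only:)
  qed
  have "eventually (\<lambda>h. F h = scaleC (inverse h) ((\<Sum>k. scaleC ((z + h - z0)^k) (a k))
      - (\<Sum>k. scaleC ((z - z0)^k) (a k)))) (at 0)"
    unfolding eventually_at using \<open>0 < \<delta>\<close> quotient_eq by (intro exI[of _ \<delta>]) auto
  then show "\<exists>d. ((\<lambda>h. scaleC (inverse h) ((\<Sum>k. scaleC ((z + h - z0)^k) (a k))
      - (\<Sum>k. scaleC ((z - z0)^k) (a k)))) \<longlongrightarrow> d) (at 0)"
    by (intro exI[of _ "F 0"] Lim_transform_eventually[OF lim_F])
qed

lemma local_resolvent_of_preimage_chain:
  fixes T :: "'a::complex_banach \<Rightarrow>\<^sub>L 'a"
  assumes cT: "complex_bounded_op T"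
    and v0: "scaleC l (v 0) - T (v 0) = x"
    and v_Suc: "\<And>k. scaleC l (v (Suc k)) - T (v (Suc k)) = v k"
    and bound: "\<And>k. norm (v k) \<le> M * Q^k" and Q: "0 < Q"
  shows "l \<in> local_resolvent T x"
proof -
  define A where "A y = scaleC l y - T y" for y
  have "bounded_linear A"
    unfolding A_def by (intro bounded_linear_sub bounded_linear_scaleC_right blinfun.bounded_linear_right)
  have A_scaleC: "A (scaleC c y) = scaleC c (A y)" for c y
    using cT unfolding A_def complex_bounded_op_def
    by (simp add: scaleC_scaleC scaleC_diff_right mult.commute)
  define u where "u z = (\<Sum>k. scaleC ((z - l)^k) (scaleC ((-1)^k) (v k)))" for z
  have "c_holomorphic_on u (ball l (1/Q))"
    unfolding u_def
    by (rule c_holomorphic_on_power_series[where K=M, OF _ Q]) (simp add: norm_scaleC norm_power bound)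
  moreover have "scaleC z (u z) - T (u z) = x" if "z \<in> ball l (1/Q)" for z
  proof -
    define w where "w k = scaleC ((l - z)^k) (v k)" for k
    have "cmod (l - z) * Q < 1" using that Q by (simp add: dist_norm field_simps)
    then have "summable w"
      unfolding w_def using Q by (intro summable_scaleC_power_series[OF bound]) auto
    have "u z = suminf w"
      by (simp add: u_def w_def[abs_def] scaleC_scaleC power_mult_distrib[symmetric])
    have A_w: "A (w (Suc k)) = scaleC (l - z) (w k)" for k
      using v_Suc[of k] by (simp add: w_def A_scaleC A_def[symmetric] scaleC_scaleC)
    have "A (u z) = (\<Sum>k. A (w k))"
      unfolding \<open>u z = suminf w\<close> by (rule bounded_linear.suminf[OF \<open>bounded_linear A\<close> \<open>summable w\<close>])
    also have "\<dots> = A (w 0) + (\<Sum>k. A (w (Suc k)))"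
      using suminf_split_head[OF bounded_linear.summable[OF \<open>bounded_linear A\<close> \<open>summable w\<close>]] by simp
    also have "\<dots> = x + (\<Sum>k. scaleC (l - z) (w k))"
      using v0 by (simp only: A_w) (simp add: w_def A_def scaleC_one)
    also have "\<dots> = x + scaleC (l - z) (u z)"
      by (simp add: scaleC_suminf_right[OF \<open>summable w\<close>] \<open>u z = suminf w\<close>)
    finally show ?thesis
      by (simp add: A_def scaleC_diff_left algebra_simps)
  qed
  ultimately show ?thesis
    unfolding local_resolvent_def using Q by (intro CollectI exI[of _ "ball l (1/Q)"] exI[of _ u]) auto
qed

section \<open>Neumann series along an orbit\<close>

lemma bounded_linear_funpow_blinfun: "bounded_linear (blinfun_apply (B :: 'a::real_normed_vector \<Rightarrow>\<^sub>L 'a) ^^ n)"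
proof (induction n)
  case (Suc n)
  then show ?case
    using bounded_linear_compose[OF blinfun.bounded_linear_right Suc] by (simp add: comp_def)
qed (simp add: id_def bounded_linear_ident)

lemma norm_funpow_blinfun_le:
  "norm ((blinfun_apply (B :: 'a::real_normed_vector \<Rightarrow>\<^sub>L 'a) ^^ n) y) \<le> norm B ^ n * norm y"
proof (induction n)
  case (Suc n)
  have "norm ((blinfun_apply B ^^ Suc n) y) \<le> norm B * norm ((blinfun_apply B ^^ n) y)"
    by simp (rule norm_blinfun)
  also have "\<dots> \<le> norm B * (norm B ^ n * norm y)"
    by (intro mult_left_mono Suc) auto
  finally show ?case by (simp add: mult.assoc)
qed simp

lemma neumann_series_orbit:
  fixes B :: "'a::banach \<Rightarrow>\<^sub>L 'a"
  assumes orbit: "\<And>n. norm ((blinfun_apply B ^^ n) y) \<le> C * r^n" and "0 \<le> r" "r < 1"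
  shows "(\<Sum>m. (blinfun_apply B ^^ m) y) - B (\<Sum>m. (blinfun_apply B ^^ m) y) = y"
    and "norm ((blinfun_apply B ^^ n) (\<Sum>m. (blinfun_apply B ^^ m) y)) \<le> C / (1 - r) * r^n"
proof -
  have geom: "summable (\<lambda>m. c * r^m)" for c
    using assms(2,3) by (intro summable_mult summable_geometric) auto
  have summ: "summable (\<lambda>m. (blinfun_apply B ^^ m) y)"
    by (rule summable_comparison_test[OF _ geom]) (use orbit in auto)
  have "B (\<Sum>m. (blinfun_apply B ^^ m) y) = (\<Sum>m. (blinfun_apply B ^^ Suc m) y)"
    using bounded_linear.suminf[OF blinfun.bounded_linear_right summ] by simp
  then show "(\<Sum>m. (blinfun_apply B ^^ m) y) - B (\<Sum>m. (blinfun_apply B ^^ m) y) = y"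
    using suminf_split_head[OF summ] by simp
  have shift: "(blinfun_apply B ^^ n) (\<Sum>m. (blinfun_apply B ^^ m) y) = (\<Sum>m. (blinfun_apply B ^^ (n + m)) y)"
    using bounded_linear.suminf[OF bounded_linear_funpow_blinfun summ] by (simp add: funpow_add)
  have bound: "norm ((blinfun_apply B ^^ (n + m)) y) \<le> C * r^n * r^m" for m
    using orbit[of "n + m"] by (simp add: power_add mult.assoc)
  have summ_norm: "summable (\<lambda>m. norm ((blinfun_apply B ^^ (n + m)) y))"
    by (rule summable_comparison_test[OF _ geom]) (use bound in auto)
  have "norm (\<Sum>m. (blinfun_apply B ^^ (n + m)) y) \<le> (\<Sum>m. norm ((blinfun_apply B ^^ (n + m)) y))"
    by (rule summable_norm[OF summ_norm])
  also have "\<dots> \<le> (\<Sum>m. C * r^n * r^m)"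
    by (rule suminf_le[OF bound summ_norm geom])
  also have "\<dots> = C / (1 - r) * r^n"
    using suminf_mult[OF summable_geometric[of r], of "C * r^n"] suminf_geometric[of r] assms(2,3)
    by simp
  finally show "norm ((blinfun_apply B ^^ n) (\<Sum>m. (blinfun_apply B ^^ m) y)) \<le> C / (1 - r) * r^n"
    unfolding shift .
qed

lemma neumann_iterates:
  fixes B :: "'a::banach \<Rightarrow>\<^sub>L 'a"
  assumes "\<And>n. norm ((blinfun_apply B ^^ n) x) \<le> K * r^n" and "0 \<le> K" "0 \<le> r" "r < 1"
  obtains g where "g 0 = x" and "\<And>k. g (Suc k) - B (g (Suc k)) = g k"
    and "\<And>k. norm (g k) \<le> K / (1 - r)^k"
proof
  define g where "g k = ((\<lambda>y. \<Sum>m. (blinfun_apply B ^^ m) y) ^^ k) x" for k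
  have orbit: "norm ((blinfun_apply B ^^ n) (g k)) \<le> K / (1 - r)^k * r^n" for k n
  proof (induction k arbitrary: n)
    case (Suc k)
    then show ?case
      using neumann_series_orbit(2)[of B "g k" "K / (1 - r)^k" r n] assms(3,4)
      by (simp add: g_def mult.commute)
  qed (use assms(1) in \<open>simp add: g_def\<close>)
  show "g 0 = x" by (simp add: g_def)
  show "g (Suc k) - B (g (Suc k)) = g k" for k
    using neumann_series_orbit(1)[OF orbit assms(3,4)] by (simp add: g_def)
  show "norm (g k) \<le> K / (1 - r)^k" for k
    using orbit[where k=k and n=0] by simp
qed

text \<open>The chain is \<open>v\<^sub>k = P^(k+1) (1 - B)^-(k+1) x\<close>; no linearity of \<open>A\<close> is needed.\<close>

lemma preimage_chain:
  fixes A :: "'a::banach \<Rightarrow> 'a" and B P :: "'a \<Rightarrow>\<^sub>L 'a"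
  assumes AP: "\<And>y. A (P y) = y - B y" and PB: "\<And>y. P (B y) = B (P y)"
    and orbit: "\<And>n. norm ((blinfun_apply B ^^ n) x) \<le> K * r^n" and "0 \<le> r" "r < 1"
  obtains v Q where "0 < Q" "A (v 0) = x" "\<And>k. A (v (Suc k)) = v k"
    "\<And>k. norm (v k) \<le> K * Q ^ Suc k"
proof -
  have "0 \<le> K" using order_trans[OF norm_ge_zero orbit[of 0]] by simp
  then obtain g where g0: "g 0 = x" and g_step: "\<And>k. g (Suc k) - B (g (Suc k)) = g k"
    and g_bound: "\<And>k. norm (g k) \<le> K / (1 - r)^k"
    using neumann_iterates[OF orbit _ assms(4,5)] by blast
  define Pk where "Pk k = blinfun_apply P ^^ k" for k
  have Pk_commute: "Pk k (y - B y) = Pk k y - B (Pk k y)" for k y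
    by (induction k arbitrary: y) (simp_all add: Pk_def blinfun.diff_right PB)
  define v where "v k = Pk (Suc k) (g (Suc k))" for k
  have Av: "A (v k) = Pk k (g k)" for k
  proof -
    have "A (v k) = A (P (Pk k (g (Suc k))))" by (simp add: v_def Pk_def)
    also have "\<dots> = Pk k (g (Suc k) - B (g (Suc k)))" by (simp only: AP Pk_commute)
    finally show ?thesis by (simp only: g_step)
  qed
  define Q where "Q = (norm P + 1) / (1 - r)"
  have "0 < Q" unfolding Q_def using assms(5) by (simp add: add_nonneg_pos)
  moreover have "norm (v k) \<le> K * Q ^ Suc k" for k
  proof -
    have "norm (v k) \<le> norm P ^ Suc k * norm (g (Suc k))"
      unfolding v_def Pk_def by (rule norm_funpow_blinfun_le)
    also have "\<dots> \<le> (norm P + 1) ^ Suc k * (K / (1 - r) ^ Suc k)"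
      by (intro mult_mono power_mono g_bound) auto
    also have "\<dots> = K * Q ^ Suc k" by (simp add: Q_def power_divide)
    finally show ?thesis .
  qed
  moreover have "A (v 0) = x" "A (v (Suc k)) = v k" for k
    using Av[of 0] Av[of "Suc k"] by (simp_all add: g0 Pk_def v_def)
  ultimately show ?thesis using that by blast
qed

section \<open>Exponentials in Banach algebras\<close>

lemma exp_of_nat_mult_generic: "exp (of_nat n * X) = exp X ^ n"
  for X :: "'a::{real_normed_algebra_1,banach}"
proof (induction n)
  case (Suc n)
  have "X * (of_nat n * X) = (of_nat n * X) * X"
    by (simp add: mult_of_nat_commute mult.assoc)
  then have "exp (X + of_nat n * X) = exp X * exp (of_nat n * X)"
    by (rule exp_add_commuting)
  then show ?case using Suc by (simp add: distrib_right)
qed simp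

definition exp_phi :: "'a::{real_normed_algebra_1,banach} \<Rightarrow> 'a" where
  "exp_phi X = (\<Sum>n. X^n /\<^sub>R fact (Suc n))"

lemma summable_exp_phi: "summable (\<lambda>n. (X::'a::{real_normed_algebra_1,banach})^n /\<^sub>R fact (Suc n))"
proof (rule summable_comparison_test[OF _ summable_norm_exp[of X]])
  have "norm (X^n) / fact (Suc n) \<le> norm (X^n) / fact n" for n
    by (intro divide_left_mono) (auto intro: fact_mono)
  then show "\<exists>N. \<forall>n\<ge>N. norm (X^n /\<^sub>R fact (Suc n)) \<le> norm (X^n /\<^sub>R fact n)"
    by (simp add: divide_inverse mult.commute)
qed

lemma mult_exp_phi: "X * exp_phi X = exp X - 1"
proof -
  have "(\<lambda>n. X^n /\<^sub>R fact n) sums exp X"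
    unfolding exp_def by (rule summable_sums[OF summable_exp_generic])
  then have "(\<lambda>n. X * (X^n /\<^sub>R fact (Suc n))) sums (exp X - 1)"
    using sums_Suc_iff[of "\<lambda>n. X^n /\<^sub>R fact n" "exp X - 1"] by (simp add: mult_scaleR_right)
  moreover have "(\<lambda>n. X * (X^n /\<^sub>R fact (Suc n))) sums (X * exp_phi X)"
    unfolding exp_phi_def by (rule sums_mult[OF summable_sums[OF summable_exp_phi]])
  ultimately show ?thesis using sums_unique2 by metis
qed

lemma exp_phi_commute:
  assumes "Z * X = X * Z"
  shows "Z * exp_phi X = exp_phi X * Z"
proof -
  have "Z * (X^n /\<^sub>R fact (Suc n)) = (X^n /\<^sub>R fact (Suc n)) * Z" for n
    using power_commuting_commutes[OF assms[symmetric], of n]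
    by (simp add: mult_scaleR_left mult_scaleR_right)
  then have "(\<Sum>n. Z * (X^n /\<^sub>R fact (Suc n))) = (\<Sum>n. (X^n /\<^sub>R fact (Suc n)) * Z)"
    by (simp only:)
  then show ?thesis
    unfolding exp_phi_def suminf_mult[OF summable_exp_phi] suminf_mult2[OF summable_exp_phi] .
qed

lemma mult_scaled_exp_phi: "X * ((- s) *\<^sub>R exp_phi (s *\<^sub>R X)) = 1 - exp (s *\<^sub>R X)"
proof -
  have "X * ((- s) *\<^sub>R exp_phi (s *\<^sub>R X)) = - ((s *\<^sub>R X) * exp_phi (s *\<^sub>R X))"
    by (simp add: mult_scaleR_left mult_scaleR_right)
  then show ?thesis by (simp add: mult_exp_phi)
qed

section \<open>A unital Banach algebra containing the operators\<close>

text \<open>The real component of \<open>(S, a)\<close>, normed by \<open>max \<parallel>S\<parallel> |a|\<close>, only serves to guarantee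
  \<open>\<parallel>1\<parallel> = 1\<close>, which fails for \<open>B(X)\<close> itself when \<open>X = {0}\<close>.\<close>

typedef (overloaded) 'a op_alg = "UNIV :: (('a::real_normed_vector \<Rightarrow>\<^sub>L 'a) \<times> real) set"
  morphisms op_alg_rep Op_alg by simp

setup_lifting type_definition_op_alg

lemma max_norm_add_le:
  fixes a c :: "'a::real_normed_vector" and b d :: real
  shows "max (norm (a + c)) \<bar>b + d\<bar> \<le> max (norm a) \<bar>b\<bar> + max (norm c) \<bar>d\<bar>"
  using norm_triangle_ineq[of a c] abs_triangle_ineq[of b d] by linarith

lemma max_norm_compose_le:
  fixes a c :: "'a::real_normed_vector \<Rightarrow>\<^sub>L 'a" and b d :: real
  shows "max (norm (a o\<^sub>L c)) \<bar>b * d\<bar> \<le> max (norm a) \<bar>b\<bar> * max (norm c) \<bar>d\<bar>"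
proof -
  have "norm (a o\<^sub>L c) \<le> max (norm a) \<bar>b\<bar> * max (norm c) \<bar>d\<bar>"
    by (rule order_trans[OF norm_blinfun_compose mult_mono]) auto
  moreover have "\<bar>b * d\<bar> \<le> max (norm a) \<bar>b\<bar> * max (norm c) \<bar>d\<bar>"
    unfolding abs_mult by (rule mult_mono) auto
  ultimately show ?thesis by simp
qed

instantiation op_alg :: (real_normed_vector) real_normed_algebra_1
begin
lift_definition zero_op_alg :: "'a op_alg" is 0 .
lift_definition one_op_alg :: "'a op_alg" is "(id_blinfun, 1)" .
lift_definition plus_op_alg :: "'a op_alg \<Rightarrow> 'a op_alg \<Rightarrow> 'a op_alg" is "(+)" .
lift_definition minus_op_alg :: "'a op_alg \<Rightarrow> 'a op_alg \<Rightarrow> 'a op_alg" is "(-)" .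
lift_definition uminus_op_alg :: "'a op_alg \<Rightarrow> 'a op_alg" is uminus .
lift_definition scaleR_op_alg :: "real \<Rightarrow> 'a op_alg \<Rightarrow> 'a op_alg" is scaleR .
lift_definition times_op_alg :: "'a op_alg \<Rightarrow> 'a op_alg \<Rightarrow> 'a op_alg"
  is "\<lambda>X Y. (fst X o\<^sub>L fst Y, snd X * snd Y)" .
lift_definition norm_op_alg :: "'a op_alg \<Rightarrow> real" is "\<lambda>X. max (norm (fst X)) \<bar>snd X\<bar>" .
definition dist_op_alg :: "'a op_alg \<Rightarrow> 'a op_alg \<Rightarrow> real" where "dist_op_alg X Y = norm (X - Y)"
definition sgn_op_alg :: "'a op_alg \<Rightarrow> 'a op_alg" where "sgn_op_alg X = inverse (norm X) *\<^sub>R X"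
definition uniformity_op_alg :: "('a op_alg \<times> 'a op_alg) filter" where
  "uniformity_op_alg = (INF e\<in>{0 <..}. principal {(X, Y). dist X Y < e})"
definition open_op_alg :: "'a op_alg set \<Rightarrow> bool" where
  "open_op_alg S = (\<forall>X\<in>S. \<forall>\<^sub>F (X', Y) in uniformity. X' = X \<longrightarrow> Y \<in> S)"
instance
  apply intro_classes
  apply (simp_all add: dist_op_alg_def sgn_op_alg_def uniformity_op_alg_def open_op_alg_def)
  apply ((transfer; auto simp: algebra_simps blinfun.bilinear_simps intro!: blinfun_eqI)+)[16]
  subgoal by transfer (simp add: zero_prod_def)
  subgoal by transfer (auto simp: zero_prod_def max_def)
  subgoal by transfer (simp only: fst_add snd_add max_norm_add_le)
  subgoal by transfer (simp add: abs_mult max_mult_distrib_left)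
  subgoal by transfer (simp only: fst_conv snd_conv max_norm_compose_le)
  subgoal by transfer (simp add: max_def norm_blinfun_id_le)
  done
end

lemma norm_op_alg: "norm X = max (norm (fst (op_alg_rep X))) \<bar>snd (op_alg_rep X)\<bar>"
  by transfer simp

lemma bounded_linear_op_alg_rep: "bounded_linear op_alg_rep"
proof (rule bounded_linear_intro[where K=2])
  show "norm (op_alg_rep X) \<le> norm X * 2" for X :: "'a op_alg"
    using norm_Pair_le[of "fst (op_alg_rep X)" "snd (op_alg_rep X)"] by (simp add: norm_op_alg)
qed (transfer; simp)+

lemma bounded_linear_Op_alg: "bounded_linear Op_alg"
proof (rule bounded_linear_intro[where K=1])
  show "norm (Op_alg p) \<le> norm p * 1" for p :: "('a \<Rightarrow>\<^sub>L 'a) \<times> real"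
    using norm_fst_le[of "fst p" "snd p"] norm_snd_le[of "snd p" "fst p"]
    by (simp add: norm_op_alg Op_alg_inverse)
qed (simp_all add: plus_op_alg_def scaleR_op_alg_def Op_alg_inverse)

instance op_alg :: (banach) banach
proof
  fix X :: "nat \<Rightarrow> 'a op_alg"
  assume "Cauchy X"
  then have "Cauchy (\<lambda>n. op_alg_rep (X n))"
    by (rule bounded_linear.Cauchy[OF bounded_linear_op_alg_rep])
  then obtain L where "(\<lambda>n. op_alg_rep (X n)) \<longlonglongrightarrow> L"
    using Cauchy_convergent_iff convergent_def by blast
  then have "(\<lambda>n. Op_alg (op_alg_rep (X n))) \<longlonglongrightarrow> Op_alg L"
    by (rule bounded_linear.tendsto[OF bounded_linear_Op_alg])
  then show "convergent X"
    by (auto simp: convergent_def op_alg_rep_inverse)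
qed

definition op_part :: "'a::real_normed_vector op_alg \<Rightarrow> ('a \<Rightarrow>\<^sub>L 'a)" where
  "op_part X = fst (op_alg_rep X)"

definition embed_op :: "('a::real_normed_vector \<Rightarrow>\<^sub>L 'a) \<Rightarrow> 'a op_alg" where
  "embed_op T = Op_alg (T, 0)"

lemma op_part_one [simp]: "op_part 1 = id_blinfun"
  and op_part_mult [simp]: "op_part (X * Y) = op_part X o\<^sub>L op_part Y"
  and op_part_add [simp]: "op_part (X + Y) = op_part X + op_part Y"
  and op_part_diff [simp]: "op_part (X - Y) = op_part X - op_part Y"
  and op_part_scaleR [simp]: "op_part (r *\<^sub>R X) = r *\<^sub>R op_part X"
  and op_part_embed_op [simp]: "op_part (embed_op T) = T"
  unfolding op_part_def embed_op_def by (transfer; simp)+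

lemma embed_op_mult: "embed_op S * embed_op T = embed_op (S o\<^sub>L T)"
  and scaleR_embed_op: "r *\<^sub>R embed_op T = embed_op (r *\<^sub>R T)"
  unfolding embed_op_def by (transfer; simp)+

lemma bounded_linear_op_part: "bounded_linear op_part"
  by (rule bounded_linear_intro[where K=1]) (simp_all add: norm_op_alg op_part_def[symmetric])

lemma op_part_power_apply: "op_part (X ^ n) y = (blinfun_apply (op_part X) ^^ n) y"
  by (induction n arbitrary: y) simp_all

lemma op_part_exp_apply:
  fixes X :: "'a::banach op_alg"
  shows "op_part (exp X) y = (\<Sum>n. (1 / fact n) *\<^sub>R (blinfun_apply (op_part X) ^^ n) y)"
proof -
  have "summable (\<lambda>n. X^n /\<^sub>R fact n)" by (rule summable_exp_generic)
  then have "(\<lambda>n. op_part (X^n /\<^sub>R fact n) y) sums op_part (exp X) y"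
    unfolding exp_def
    by (intro bounded_linear.sums[OF blinfun.bounded_linear_left]
          bounded_linear.sums[OF bounded_linear_op_part] summable_sums)
  then show ?thesis
    by (simp add: sums_iff op_part_power_apply blinfun.scaleR_left divide_inverse)
qed

definition scalar_op :: "complex \<Rightarrow> 'a::complex_banach op_alg" where
  "scalar_op c = embed_op (Blinfun (scaleC c))"

lemma op_part_scalar_op_apply [simp]: "op_part (scalar_op c) y = scaleC c y"
  by (simp add: scalar_op_def bounded_linear_Blinfun_apply[OF bounded_linear_scaleC_right])

lemma scaleR_scalar_op: "r *\<^sub>R scalar_op c = (scalar_op (of_real r * c) :: 'a::complex_banach op_alg)"
  unfolding scalar_op_def scaleR_embed_op
  by (rule arg_cong[where f=embed_op], rule blinfun_eqI)
     (simp add: bounded_linear_Blinfun_apply[OF bounded_linear_scaleC_right] blinfun.scaleR_left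
       scaleC_scaleC[symmetric] scaleC_of_real)

lemma scalar_op_embed_op_commute:
  assumes "complex_bounded_op T"
  shows "scalar_op c * embed_op T = embed_op T * scalar_op c"
  unfolding scalar_op_def embed_op_mult
  by (rule arg_cong[where f=embed_op], rule blinfun_eqI)
     (use assms in \<open>simp add: bounded_linear_Blinfun_apply[OF bounded_linear_scaleC_right]
       complex_bounded_op_def\<close>)

lemma op_part_exp_scalar_op_apply:
  "op_part (exp (scalar_op c)) y = scaleC (exp c) (y::'a::complex_banach)"
proof -
  have "(blinfun_apply (op_part (scalar_op c :: 'a op_alg)) ^^ n) y = scaleC (c^n) y" for n
    by (induction n) (simp_all add: scaleC_one scaleC_scaleC)
  moreover have "scaleC (exp c) y = (\<Sum>n. scaleC (c^n /\<^sub>R fact n) y)"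
    unfolding exp_def by (rule scaleC_suminf_left[OF summable_exp_generic])
  ultimately show ?thesis
    by (simp add: op_part_exp_apply scaleC_scaleR_left divide_inverse)
qed

lemma op_exp_apply_eq_exp: "op_exp_apply t T x = op_part (exp (t *\<^sub>R embed_op T)) x"
proof -
  have "(blinfun_apply (op_part (t *\<^sub>R embed_op T)) ^^ n) y = t^n *\<^sub>R (blinfun_apply T ^^ n) y" for n y
    by (induction n) (simp_all add: blinfun.scaleR_left blinfun.scaleR_right)
  then show ?thesis
    by (simp add: op_part_exp_apply op_exp_apply_def divide_inverse mult.commute)
qed

lemma op_part_exp_shifted_apply:
  fixes T :: "'a::complex_banach \<Rightarrow>\<^sub>L 'a"
  assumes "complex_bounded_op T"
  shows "op_part (exp (s *\<^sub>R (scalar_op l - embed_op T))) x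
         = scaleC (exp (of_real s * l)) (op_exp_apply (-s) T x)"
proof -
  have split: "s *\<^sub>R (scalar_op l - embed_op T) = scalar_op (of_real s * l) + (-s) *\<^sub>R embed_op T"
    by (simp add: scaleR_diff_right scaleR_scalar_op)
  have "scalar_op (of_real s * l) * ((-s) *\<^sub>R embed_op T)
      = ((-s) *\<^sub>R embed_op T) * (scalar_op (of_real s * l) :: 'a op_alg)"
    using scalar_op_embed_op_commute[OF assms] by (simp add: mult_scaleR_left mult_scaleR_right)
  then have "exp (s *\<^sub>R (scalar_op l - embed_op T))
      = exp (scalar_op (of_real s * l)) * exp ((-s) *\<^sub>R embed_op T)"
    unfolding split by (rule exp_add_commuting)
  then show ?thesis
    by (simp add: op_part_exp_scalar_op_apply op_exp_apply_eq_exp)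
qed

section \<open>Regular weights grow subexponentially\<close>

text \<open>If \<open>ln w(s) \<ge> e s\<close> for all \<open>s > 0\<close>, the integrand dominates \<open>e/(2t)\<close> on \<open>[1, \<infinity>)\<close>,
  whose integral diverges.\<close>

lemma exists_log_below_linear:
  fixes w :: "real \<Rightarrow> real"
  assumes integrable: "\<And>b. (\<lambda>t. ln (w t) / (1 + t\<^sup>2)) integrable_on {1..b}"
    and bounded: "\<And>b. integral {1..b} (\<lambda>t. ln (w t) / (1 + t\<^sup>2)) \<le> I"
    and e: "0 < e"
  shows "\<exists>s>0. ln (w s) < e * s"
proof (rule ccontr)
  assume "\<not> ?thesis"
  then have above: "e * s \<le> ln (w s)" if "0 < s" for s using that by force
  define b where "b = exp (2 * (\<bar>I\<bar> + 1) / e)"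
  have "1 \<le> b" using e by (simp add: b_def)
  have log_integral: "((\<lambda>t. e / (2 * t)) has_integral (e/2 * ln b)) {1..b}"
  proof -
    have "((\<lambda>t. e / (2 * t)) has_integral (e/2 * ln b - e/2 * ln 1)) {1..b}"
    proof (rule fundamental_theorem_of_calculus[OF \<open>1 \<le> b\<close>])
      fix t assume "t \<in> {1..b}"
      then have "((\<lambda>t. e/2 * ln t) has_real_derivative (e/2 * inverse t)) (at t within {1..b})"
        by (intro DERIV_cmult DERIV_ln[THEN has_field_derivative_at_within]) simp
      then show "((\<lambda>t. e/2 * ln t) has_vector_derivative e / (2 * t)) (at t within {1..b})"
        by (simp add: has_real_derivative_iff_has_vector_derivative[symmetric] field_simps)
    qed
    then show ?thesis by simp
  qed
  have "e / (2 * t) \<le> ln (w t) / (1 + t\<^sup>2)" if "t \<in> {1..b}" for t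
  proof -
    have "1 \<le> t" using that by simp
    then have "1 \<le> t * t" using mult_mono[of 1 t 1 t] by simp
    then have "e * (1 + t\<^sup>2) \<le> e * t * (2 * t)"
      using e by (simp add: power2_eq_square algebra_simps mult_left_mono)
    then have "e / (2 * t) \<le> e * t / (1 + t\<^sup>2)"
      using \<open>1 \<le> t\<close> by (simp add: field_simps add_pos_nonneg)
    also have "\<dots> \<le> ln (w t) / (1 + t\<^sup>2)"
      using above[of t] \<open>1 \<le> t\<close> by (intro divide_right_mono) auto
    finally show ?thesis .
  qed
  then have "e/2 * ln b \<le> integral {1..b} (\<lambda>t. ln (w t) / (1 + t\<^sup>2))"
    using integral_le[OF has_integral_integrable[OF log_integral] integrable] log_integral
    by (simp add: integral_unique)
  moreover have "e/2 * ln b = \<bar>I\<bar> + 1" using e by (simp add: b_def)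
  ultimately show False using bounded[of b] by linarith
qed

text \<open>Submultiplicativity propagates \<open>w(s) \<le> exp(e s)\<close> from one point \<open>s > 0\<close> to all \<open>t \<ge> 0\<close>:
  write \<open>t = r + k s\<close> with \<open>0 \<le> r \<le> s\<close> and bound \<open>w(r)\<close> by the maximum of \<open>w\<close> on \<open>[0, s]\<close>.\<close>

lemma submultiplicative_exp_bound:
  fixes w :: "real \<Rightarrow> real"
  assumes cont: "continuous_on {0..s} w" and ge1: "\<And>t. 1 \<le> w t"
    and submult: "\<And>t u. w (t + u) \<le> w t * w u"
    and "0 < s" "w s \<le> exp (e * s)" "0 \<le> e"
  shows "\<exists>M. \<forall>t\<ge>0. w t \<le> M * exp (e * t)"
proof -
  obtain t_max where t_max: "\<forall>r\<in>{0..s}. w r \<le> w t_max"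
    using continuous_attains_sup[OF compact_Icc _ cont] \<open>0 < s\<close> by fastforce
  have iterate: "w (r + real k * s) \<le> w r * w s ^ k" for r k
  proof (induction k)
    case (Suc k)
    have "w (r + real (Suc k) * s) \<le> w (r + real k * s) * w s"
      using submult[of "r + real k * s" s] by (simp add: algebra_simps)
    also have "\<dots> \<le> w r * w s ^ k * w s"
      using Suc ge1[of s] by (intro mult_right_mono) auto
    finally show ?case by (simp add: mult_ac)
  qed simp
  have "w t \<le> w t_max * exp (e * t)" if "0 \<le> t" for t
  proof -
    define k where "k = nat \<lfloor>t / s\<rfloor>"
    have k: "real k = of_int \<lfloor>t / s\<rfloor>" using that \<open>0 < s\<close> by (simp add: k_def)
    have "real k \<le> t / s" "t / s < real k + 1"
      unfolding k by (rule of_int_floor_le, rule real_of_int_floor_add_one_gt)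
    then have "real k * s \<le> t" "t < real k * s + s"
      using \<open>0 < s\<close> by (simp_all add: field_simps)
    define r where "r = t - real k * s"
    have "r \<in> {0..s}" using \<open>real k * s \<le> t\<close> \<open>t < real k * s + s\<close> by (simp add: r_def)
    have "w t \<le> w r * w s ^ k" using iterate[of r k] by (simp add: r_def)
    also have "\<dots> \<le> w t_max * exp (e * s) ^ k"
      using t_max \<open>r \<in> {0..s}\<close> assms(5) ge1[of s] ge1[of r] ge1[of t_max]
      by (intro mult_mono power_mono) auto
    also have "\<dots> = w t_max * exp (e * (real k * s))"
      by (simp add: exp_of_nat_mult[symmetric] mult_ac)
    also have "\<dots> \<le> w t_max * exp (e * t)"
      using \<open>real k * s \<le> t\<close> \<open>0 \<le> e\<close> ge1[of t_max]
      by (intro mult_left_mono) (auto intro: mult_left_mono)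
    finally show ?thesis .
  qed
  then show ?thesis by blast
qed

lemma regular_weight_exp_bound:
  assumes "regular_weight \<omega>" "0 < e"
  shows "\<exists>M. \<forall>t. \<omega> t \<le> M * exp (e * \<bar>t\<bar>)"
proof -
  define F where "F t = ln (\<omega> t) / (1 + t\<^sup>2)" for t
  have weight: "continuous_on UNIV \<omega>" "\<And>t. 1 \<le> \<omega> t" "\<And>t s. \<omega> (t + s) \<le> \<omega> t * \<omega> s"
    using assms(1) by (auto simp: regular_weight_def weight_def)
  have "F integrable_on UNIV" using assms(1) by (simp add: regular_weight_def F_def[abs_def])
  then have F_integrable: "F integrable_on {a..b}" for a b by (rule integrable_on_subinterval) auto
  have F_bounded: "integral {a..b} F \<le> integral UNIV F" for a b
    using weight(2) \<open>F integrable_on UNIV\<close> F_integrable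
    by (intro integral_subset_le) (auto simp: F_def)
  have half_line: "\<exists>M. \<forall>t\<ge>0. w t \<le> M * exp (e * t)"
    if cont: "continuous_on UNIV w" and ge1: "\<And>t. 1 \<le> w t"
      and submult: "\<And>t s. w (t + s) \<le> w t * w s"
      and integrable: "\<And>b. (\<lambda>t. ln (w t) / (1 + t\<^sup>2)) integrable_on {1..b}"
      and bounded: "\<And>b. integral {1..b} (\<lambda>t. ln (w t) / (1 + t\<^sup>2)) \<le> integral UNIV F"
    for w
  proof -
    obtain s where "0 < s" "ln (w s) < e * s"
      using exists_log_below_linear[OF integrable bounded \<open>0 < e\<close>] by blast
    then have "w s \<le> exp (e * s)"
      using ge1[of s] by (metis exp_ln exp_le_cancel_iff less_imp_le less_le_trans zero_less_one)
    then show ?thesis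
      using ge1 submult \<open>0 < s\<close> \<open>0 < e\<close> continuous_on_subset[OF cont]
      by (intro submultiplicative_exp_bound[of s w]) auto
  qed
  obtain M1 where M1: "\<forall>t\<ge>0. \<omega> t \<le> M1 * exp (e * t)"
    using half_line[OF weight] F_integrable F_bounded by (auto simp: F_def[abs_def])
  have "continuous_on UNIV (\<lambda>t. \<omega> (- t))"
    by (rule continuous_on_compose2[OF weight(1)]) (auto intro: continuous_intros)
  moreover have "\<omega> (- (t + s)) \<le> \<omega> (- t) * \<omega> (- s)" for t s
    using weight(3)[of "- t" "- s"] by simp
  moreover have "(\<lambda>t. F (- t)) integrable_on {1..b}"
    and "integral {1..b} (\<lambda>t. F (- t)) \<le> integral UNIV F" for b
    using Henstock_Kurzweil_Integration.integrable_reflect_real[where f=F and a="- b" and b="- 1"]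
      Henstock_Kurzweil_Integration.integral_reflect_real[where f=F and a="- b" and b="- 1"]
      F_integrable[of "- b" "- 1"] F_bounded[of "- b" "- 1"] by simp_all
  ultimately obtain M2 where M2: "\<forall>t\<ge>0. \<omega> (- t) \<le> M2 * exp (e * t)"
    using half_line[of "\<lambda>t. \<omega> (- t)"] weight(2) by (auto simp: F_def[abs_def])
  have "\<omega> t \<le> max M1 M2 * exp (e * \<bar>t\<bar>)" for t
  proof (cases "0 \<le> t")
    case True
    then show ?thesis using M1 by (auto intro: order_trans mult_right_mono)
  next
    case False
    then show ?thesis using M2[rule_format, of "- t"] by (auto intro: order_trans mult_right_mono)
  qed
  then show ?thesis by blast
qed

section \<open>The local spectrum\<close>

lemma norm_exp_shifted_orbit_le:
  fixes T :: "'a::complex_banach \<Rightarrow>\<^sub>L 'a"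
  assumes cT: "complex_bounded_op T"
    and bound: "\<And>t. norm (op_exp_apply t T x) \<le> C * \<omega> t" and "0 \<le> C"
    and weight: "\<And>t. \<omega> t \<le> M * exp (\<bar>Re l\<bar> / 2 * \<bar>t\<bar>)"
  shows "norm ((blinfun_apply (op_part (exp ((- Re l) *\<^sub>R (scalar_op l - embed_op T)))) ^^ n) x)
    \<le> (C * M) * exp (- (Re l)\<^sup>2 / 2) ^ n"
proof -
  define s where "s = real n * - Re l"
  have "(blinfun_apply (op_part (exp ((- Re l) *\<^sub>R (scalar_op l - embed_op T)))) ^^ n) x
      = op_part (exp (s *\<^sub>R (scalar_op l - embed_op T))) x"
    by (simp add: op_part_power_apply[symmetric] exp_of_nat_mult_generic[symmetric] s_def
        scaleR_conv_of_real mult.assoc)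
  also have "\<dots> = scaleC (exp (of_real s * l)) (op_exp_apply (- s) T x)"
    by (rule op_part_exp_shifted_apply[OF cT])
  finally have "norm ((blinfun_apply (op_part (exp ((- Re l) *\<^sub>R (scalar_op l - embed_op T)))) ^^ n) x)
      = exp (s * Re l) * norm (op_exp_apply (- s) T x)"
    by (simp add: norm_scaleC)
  also have "\<dots> \<le> exp (s * Re l) * (C * (M * exp (\<bar>Re l\<bar> / 2 * \<bar>s\<bar>)))"
    using order_trans[OF bound[of "- s"] mult_left_mono[OF weight[of "- s"] \<open>0 \<le> C\<close>]] by simp
  also have "\<dots> = (C * M) * exp (s * Re l + \<bar>Re l\<bar> / 2 * \<bar>s\<bar>)"
    by (simp add: exp_add mult_ac)
  also have "s * Re l + \<bar>Re l\<bar> / 2 * \<bar>s\<bar> = real n * (- (Re l)\<^sup>2 / 2)"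
    by (simp add: s_def abs_mult power2_eq_square algebra_simps)
  also have "exp (real n * (- (Re l)\<^sup>2 / 2)) = exp (- (Re l)\<^sup>2 / 2) ^ n"
    by (rule exp_of_nat_mult)
  finally show ?thesis .
qed

lemma local_resolvent_if_Re_nonzero:
  fixes T :: "'a::complex_banach \<Rightarrow>\<^sub>L 'a"
  assumes "regular_weight \<omega>" and cT: "complex_bounded_op T"
    and bound: "\<And>t. norm (op_exp_apply t T x) \<le> C * \<omega> t" and "0 \<le> C" and "Re l \<noteq> 0"
  shows "l \<in> local_resolvent T x"
proof -
  define A where "A = scalar_op l - embed_op T"
  define B where "B = exp ((- Re l) *\<^sub>R A)"
  define P where "P = Re l *\<^sub>R exp_phi ((- Re l) *\<^sub>R A)"
  have "A * P = 1 - B"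
    using mult_scaled_exp_phi[of A "- Re l"] by (simp add: B_def P_def)
  have "P * B = B * P"
    using exp_phi_commute[OF exp_times_arg_commute[of "(- Re l) *\<^sub>R A"]]
    by (simp add: B_def P_def mult_scaleR_left mult_scaleR_right)
  obtain M where "\<And>t. \<omega> t \<le> M * exp (\<bar>Re l\<bar> / 2 * \<bar>t\<bar>)"
    using regular_weight_exp_bound[OF \<open>regular_weight \<omega>\<close>, of "\<bar>Re l\<bar> / 2"] \<open>Re l \<noteq> 0\<close> by auto
  from norm_exp_shifted_orbit_le[OF cT bound \<open>0 \<le> C\<close> this]
  have orbit: "norm ((blinfun_apply (op_part B) ^^ n) x) \<le> (C * M) * exp (- (Re l)\<^sup>2 / 2) ^ n" for n
    by (simp add: B_def A_def)
  have "scaleC l (op_part P y) - T (op_part P y) = y - op_part B y" for y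
    using arg_cong[where f="\<lambda>X. blinfun_apply (op_part X) y", OF \<open>A * P = 1 - B\<close>]
    by (simp add: A_def blinfun.diff_left)
  moreover have "op_part P (op_part B y) = op_part B (op_part P y)" for y
    using arg_cong[where f="\<lambda>X. blinfun_apply (op_part X) y", OF \<open>P * B = B * P\<close>] by simp
  moreover have "exp (- (Re l)\<^sup>2 / 2) < 1" using \<open>Re l \<noteq> 0\<close> by simp
  ultimately obtain v Q where "0 < Q" "scaleC l (v 0) - T (v 0) = x"
    "\<And>k. scaleC l (v (Suc k)) - T (v (Suc k)) = v k" "\<And>k. norm (v k) \<le> (C * M) * Q ^ Suc k"
    using preimage_chain[where A="\<lambda>y. scaleC l y - T y", OF _ _ orbit] by (metis exp_ge_zero)
  then show ?thesis
    by (intro local_resolvent_of_preimage_chain[OF cT, where M="C * M * Q" and Q=Q])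
       (auto simp: mult_ac)
qed

theorem proposition2p2:
  fixes \<omega> :: "real \<Rightarrow> real" and T :: "'a::complex_banach \<Rightarrow>\<^sub>L 'a" and x :: 'a
  assumes "regular_weight \<omega>"
    and "complex_bounded_op T"
    and "\<exists>C>0. \<forall>t. norm (op_exp_apply t T x) \<le> C * \<omega> t"
  shows "local_spectrum T x \<subseteq> {z. Re z = 0}"
proof
  fix z assume "z \<in> local_spectrum T x"
  obtain C where "C > 0" and "\<And>t. norm (op_exp_apply t T x) \<le> C * \<omega> t"
    using assms(3) by blast
  then have "z \<in> local_resolvent T x" if "Re z \<noteq> 0"
    using local_resolvent_if_Re_nonzero[OF assms(1,2)] that by fastforce
  then show "z \<in> {z. Re z = 0}"
    using \<open>z \<in> local_spectrum T x\<close> by (auto simp: local_spectrum_def)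
qed

end
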